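(* Let $W\in L^\infty$ and $\lambda=(\lambda_1,\dots,\lambda_T)\in\mathbb{R}_+^T\setminus\{0\}$. (a) If $(X_t)_{t\in\mathbb{T}}\in\mathcal{A}(W)$ solves Problem $\mathrm{P}_\lambda$, then $(\lambda_t u_t'(\tilde X_t))_{t\in\mathbb{T}}$ is an $(\mathcal{F}_t)$-martingale. (b) If Problem $\mathrm{P}_\lambda$ has a solution, then $\lambda\in(0,\infty)^T$.
   Context: Let $T\ge 1$ be an integer and $\mathbb{T}=\{1,\dots,T\}$. Let $(\Omega,\mathcal{F},(\mathcal{F}_t)_{t\in\{0,1,\dots,T\}},P)$ be a filtered probability space and $L^{\infty}=L^{\infty}(\Omega,\mathcal{F}_T,P)$. Let $(r_t)_{t\in\mathbb{T}}$ be a bounded, nonnegative, predictable process ($r_t$ is $\mathcal{F}_{t-1}$-measurable), $B_0=1$, $B_t=\prod_{k=1}^t(1+r_k)$, and for a process $(X_t)$ write $\tilde X_t=X_t/B_t$. For $W\in L^\infty$, $\mathcal{A}(W)$ is the set of $(\mathcal{F}_t)$-adapted processes $(Y_t)_{t\in\mathbb{T}}$ with $Y_t\in L^\infty$ for all $t$ and $\sum_{t\in\mathbb{T}}\tilde Y_t=W$ a.s. For each $t\in\mathbb{T}$, $u_t:\mathbb{R}\to\mathbb{R}$ is strictly concave, $C^1$, with $u_t'(x)>0$ for all $x$. For $\lambda\in\mathbb{R}_+^T\setminus\{0\}$, Problem $\mathrm{P}_\lambda$ is: maximize $\sum_{t\in\mathbb{T}}\lambda_tE[u_t(\tilde Y_t)]$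 over $(Y_t)\in\mathcal{A}(W)$; a solution is an element of $\mathcal{A}(W)$ attaining the maximum. *)

theory Defs
  imports "HOL-Analysis.Analysis" "HOL-Probability.Probability"
begin

definition strictly_concave :: "(real \<Rightarrow> real) \<Rightarrow> bool" where
  "strictly_concave f \<longleftrightarrow>
     (\<forall>x y (a::real). x \<noteq> y \<and> 0 < a \<and> a < 1 \<longrightarrow>
        a * f x + (1 - a) * f y < f (a * x + (1 - a) * y))"

text \<open>Essentially bounded random variables measurable w.r.t. a sigma algebra G
  (elements of L-infinity(Omega, G, P), represented by functions).\<close>
definition Linf :: "'a measure \<Rightarrow> 'a measure \<Rightarrow> ('a \<Rightarrow> real) set" where
  "Linf M G = {Y. Y \<in> borel_measurable G \<and> (\<exists>C. AE x in M. \<bar>Y x\<bar> \<le> C)}"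

definition bank :: "(nat \<Rightarrow> 'a \<Rightarrow> real) \<Rightarrow> nat \<Rightarrow> 'a \<Rightarrow> real" where
  "bank r t x = (\<Prod>k\<in>{1..t}. 1 + r k x)"

definition disc :: "(nat \<Rightarrow> 'a \<Rightarrow> real) \<Rightarrow> (nat \<Rightarrow> 'a \<Rightarrow> real) \<Rightarrow> nat \<Rightarrow> 'a \<Rightarrow> real" where
  "disc r X t x = X t x / bank r t x"

definition admissible ::
  "'a measure \<Rightarrow> (nat \<Rightarrow> 'a measure) \<Rightarrow> nat \<Rightarrow> (nat \<Rightarrow> 'a \<Rightarrow> real) \<Rightarrow> ('a \<Rightarrow> real)
   \<Rightarrow> (nat \<Rightarrow> 'a \<Rightarrow> real) set" where
  "admissible M F T r W =
     {Y. (\<forall>t\<in>{1..T}. Y t \<in> borel_measurable (F t) \<and> Y t \<in> Linf M (F T)) \<and>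
         (AE x in M. (\<Sum>t\<in>{1..T}. disc r Y t x) = W x)}"

definition objective ::
  "'a measure \<Rightarrow> nat \<Rightarrow> (nat \<Rightarrow> real) \<Rightarrow> (nat \<Rightarrow> real \<Rightarrow> real) \<Rightarrow> (nat \<Rightarrow> 'a \<Rightarrow> real)
   \<Rightarrow> (nat \<Rightarrow> 'a \<Rightarrow> real) \<Rightarrow> real" where
  "objective M T lam u r Y = (\<Sum>t\<in>{1..T}. lam t * (\<integral>x. u t (disc r Y t x) \<partial>M))"

definition solves_P ::
  "'a measure \<Rightarrow> (nat \<Rightarrow> 'a measure) \<Rightarrow> nat \<Rightarrow> (nat \<Rightarrow> 'a \<Rightarrow> real) \<Rightarrow> ('a \<Rightarrow> real)
   \<Rightarrow> (nat \<Rightarrow> real) \<Rightarrow> (nat \<Rightarrow> real \<Rightarrow> real) \<Rightarrow> (nat \<Rightarrow> 'a \<Rightarrow> real) \<Rightarrow> bool" where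
  "solves_P M F T r W lam u X \<longleftrightarrow>
     X \<in> admissible M F T r W \<and>
     (\<forall>Y\<in>admissible M F T r W. objective M T lam u r Y \<le> objective M T lam u r X)"

definition martingale_on ::
  "'a measure \<Rightarrow> (nat \<Rightarrow> 'a measure) \<Rightarrow> nat set \<Rightarrow> (nat \<Rightarrow> 'a \<Rightarrow> real) \<Rightarrow> bool" where
  "martingale_on M F I Z \<longleftrightarrow>
     (\<forall>t\<in>I. Z t \<in> borel_measurable (F t) \<and> integrable M (Z t)) \<and>
     (\<forall>s\<in>I. \<forall>t\<in>I. s \<le> t \<longrightarrow> (AE x in M. real_cond_exp M (F s) (Z t) x = Z s x))"

end

theory Submission
  imports Defs
begin

(*
  Idea: let X solve Problem P_lambda, let s and t be two periods and A an event
  observable at both times.  Moving e units of discounted consumption from period s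
  to period t on A (and compensating with the bank account B) gives another plan in
  A(W).  Optimality of X, together with the tangent inequality for the concave
  utilities, yields for every e > 0
      lam_t E[1_A u_t'(X~_t + e 1_A)] <= lam_s E[1_A u_s'(X~_s - e 1_A)],
  and dominated convergence (e -> 0) gives lam_t E[1_A u_t'(X~_t)] <= lam_s E[1_A u_s'(X~_s)].
  Exchanging s and t turns this into an equality.  For s <= t and A in F_s this is
  exactly the martingale property of lam_t u_t'(X~_t); taking A = Omega shows that
  lam_t E[u_t'(X~_t)] does not depend on t, and since u_t' > 0 and some lam_t is
  nonzero, all lam_t are positive.
*)

section \<open>Concave functions and bounded integrands\<close>

lemma strictly_concave_tangent:
  fixes f :: "real \<Rightarrow> real"
  assumes sc: "strictly_concave f" and d: "f differentiable (at y)"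
  shows "deriv f y * (y - x) \<le> f y - f x"
proof -
  have convex: "convex_on UNIV (\<lambda>z. - f z)"
  proof (rule convex_onI)
    fix a x y :: real assume a: "0 < a" "a < 1"
    show "- f ((1 - a) *\<^sub>R x + a *\<^sub>R y) \<le> (1 - a) * - f x + a * - f y"
    proof (cases "x = y")
      case False
      then have "(1 - a) * f x + (1 - (1 - a)) * f y < f ((1 - a) * x + (1 - (1 - a)) * y)"
        using sc[unfolded strictly_concave_def, rule_format, of x y "1 - a"] a by auto
      then show ?thesis by (simp add: algebra_simps)
    qed (simp add: algebra_simps)
  qed simp
  have "((\<lambda>z. - f z) has_field_derivative - deriv f y) (at y within UNIV)"
    using d by (auto intro!: derivative_eq_intros simp: DERIV_deriv_iff_real_differentiable[symmetric])
  from convex_on_imp_above_tangent[OF convex _ _ _ this, of x] show ?thesis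
    by (simp add: algebra_simps)
qed

lemma continuous_bounded_on_interval:
  fixes f :: "real \<Rightarrow> real"
  assumes "continuous_on UNIV f"
  obtains K where "\<And>z. \<bar>z\<bar> \<le> R \<Longrightarrow> \<bar>f z\<bar> \<le> K"
proof -
  have "compact (f ` cball 0 R)"
    by (rule compact_continuous_image) (auto intro: continuous_on_subset[OF assms])
  then obtain K where "\<And>z. z \<in> cball 0 R \<Longrightarrow> \<bar>f z\<bar> \<le> K"
    using compact_imp_bounded bounded_iff by (metis image_eqI real_norm_def)
  then show ?thesis using that by auto
qed

lemma integrable_continuous_of_bounded:
  fixes f :: "real \<Rightarrow> real"
  assumes "finite_measure M" and h: "h \<in> borel_measurable M"
    and bound: "AE x in M. \<bar>h x\<bar> \<le> C" and f: "continuous_on UNIV f"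
  shows "integrable M (\<lambda>x. f (h x))"
proof -
  interpret finite_measure M by fact
  obtain K where K: "\<And>z. \<bar>z\<bar> \<le> C \<Longrightarrow> \<bar>f z\<bar> \<le> K"
    using continuous_bounded_on_interval[OF f] by blast
  have "AE x in M. norm (f (h x)) \<le> K" using bound by eventually_elim (auto intro: K)
  moreover have "(\<lambda>x. f (h x)) \<in> borel_measurable M"
    using f h by (intro measurable_compose[OF h] borel_measurable_continuous_onI)
  ultimately show ?thesis by (intro integrable_const_bound)
qed

lemma perturbed_integral_tendsto:
  fixes f :: "real \<Rightarrow> real" and g :: "'a \<Rightarrow> real"
  assumes "finite_measure M" and g[measurable]: "g \<in> borel_measurable M"
    and bound: "AE x in M. \<bar>g x\<bar> \<le> C" and f: "continuous_on UNIV f"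
    and A[measurable]: "A \<in> sets M" and e: "e \<longlonglongrightarrow> 0" and e_le_1: "\<And>n. \<bar>e n\<bar> \<le> 1"
  shows "(\<lambda>n. \<integral>x. indicator A x * f (g x + e n * indicator A x) \<partial>M)
           \<longlonglongrightarrow> (\<integral>x. indicator A x * f (g x) \<partial>M)"
proof -
  interpret finite_measure M by fact
  have [measurable]: "f \<in> borel_measurable borel"
    using f by (rule borel_measurable_continuous_onI)
  obtain K where K: "\<And>z. \<bar>z\<bar> \<le> \<bar>C\<bar> + 1 \<Longrightarrow> \<bar>f z\<bar> \<le> K"
    using continuous_bounded_on_interval[OF f] by blast
  show ?thesis
  proof (rule integral_dominated_convergence[where w="\<lambda>_. K"])
    show "AE x in M. (\<lambda>n. indicator A x * f (g x + e n * indicator A x))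
                       \<longlonglongrightarrow> indicator A x * f (g x)"
    proof (rule AE_I2)
      fix x
      have "(\<lambda>n. g x + e n * indicator A x) \<longlonglongrightarrow> g x + 0 * indicator A x"
        by (intro tendsto_intros e)
      then have "(\<lambda>n. f (g x + e n * indicator A x)) \<longlonglongrightarrow> f (g x)"
        using f by (auto intro: continuous_on_tendsto_compose)
      then show "(\<lambda>n. indicator A x * f (g x + e n * indicator A x)) \<longlonglongrightarrow> indicator A x * f (g x)"
        by (intro tendsto_intros)
    qed
    show "AE x in M. norm (indicator A x * f (g x + e n * indicator A x)) \<le> K" for n
      using bound
    proof eventually_elim
      case (elim x)
      have "\<bar>g x + e n * indicator A x\<bar> \<le> \<bar>C\<bar> + 1"
        using e_le_1[of n] elim by (auto simp: indicator_def)
      then have "\<bar>f (g x + e n * indicator A x)\<bar> \<le> K" by (rule K)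
      moreover have "0 \<le> K" using K[of 0] by auto
      ultimately show ?case by (auto simp: indicator_def)
    qed
  qed auto
qed

lemma perturbed_utility_increment:
  fixes u :: "real \<Rightarrow> real" and g :: "'a \<Rightarrow> real"
  assumes "finite_measure M" and g[measurable]: "g \<in> borel_measurable M"
    and bound: "AE x in M. \<bar>g x\<bar> \<le> C" and A[measurable]: "A \<in> sets M"
    and conc: "strictly_concave u" and diff: "\<And>z. u differentiable (at z)"
    and C1: "continuous_on UNIV (deriv u)"
  shows "a * (\<integral>x. indicator A x * deriv u (g x + a * indicator A x) \<partial>M)
           \<le> (\<integral>x. u (g x + a * indicator A x) \<partial>M) - (\<integral>x. u (g x) \<partial>M)"
proof -
  have u_cont: "continuous_on UNIV u"
    by (rule differentiable_imp_continuous_on) (auto simp: differentiable_on_def diff)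
  have bound_shift: "AE x in M. \<bar>g x + a * indicator A x\<bar> \<le> C + \<bar>a\<bar>"
    using bound by eventually_elim (auto simp: indicator_def)
  have "integrable M (\<lambda>x. deriv u (g x + a * indicator A x) * indicator A x)"
    using integrable_continuous_of_bounded[OF assms(1) _ bound_shift C1]
    by (intro integrable_real_mult_indicator[OF A]) auto
  then have int_deriv: "integrable M (\<lambda>x. a * (indicator A x * deriv u (g x + a * indicator A x)))"
    by (simp add: mult.commute)
  have int_shift: "integrable M (\<lambda>x. u (g x + a * indicator A x))"
    by (rule integrable_continuous_of_bounded[OF assms(1) _ bound_shift u_cont]) measurable
  have int_g: "integrable M (\<lambda>x. u (g x))"
    by (rule integrable_continuous_of_bounded[OF assms(1) g bound u_cont])
  have "a * (\<integral>x. indicator A x * deriv u (g x + a * indicator A x) \<partial>M)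
      = (\<integral>x. a * (indicator A x * deriv u (g x + a * indicator A x)) \<partial>M)"
    by simp
  also have "\<dots> \<le> (\<integral>x. u (g x + a * indicator A x) - u (g x) \<partial>M)"
  proof (rule integral_mono[OF int_deriv Bochner_Integration.integrable_diff[OF int_shift int_g]])
    fix x
    show "a * (indicator A x * deriv u (g x + a * indicator A x))
            \<le> u (g x + a * indicator A x) - u (g x)"
      using strictly_concave_tangent[OF conc diff, of "g x + a * indicator A x" "g x"]
      by (simp add: algebra_simps)
  qed
  also have "\<dots> = (\<integral>x. u (g x + a * indicator A x) \<partial>M) - (\<integral>x. u (g x) \<partial>M)"
    using int_shift int_g by simp
  finally show ?thesis .
qed

section \<open>Transfers between two periods\<close>

text \<open>Weights of a transfer of e units from period s to period t.\<close>
definition transfer_weight :: "nat \<Rightarrow> nat \<Rightarrow> real \<Rightarrow> nat \<Rightarrow> real" where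
  "transfer_weight s t e k = (if k = t then e else if k = s then - e else 0)"

text \<open>The plan X modified on the event A by moving e units of discounted consumption
  from period s to period t; in undiscounted terms period k changes by its weight times
  the bank account B_k.\<close>
definition transfer ::
  "(nat \<Rightarrow> 'a \<Rightarrow> real) \<Rightarrow> (nat \<Rightarrow> 'a \<Rightarrow> real) \<Rightarrow> nat \<Rightarrow> nat \<Rightarrow> 'a set \<Rightarrow> real
   \<Rightarrow> nat \<Rightarrow> 'a \<Rightarrow> real" where
  "transfer r X s t A e k x = X k x + transfer_weight s t e k * indicator A x * bank r k x"

lemma sum_transfer_weight:
  assumes "finite K" "s \<in> K" "t \<in> K" "s \<noteq> t"
  shows "(\<Sum>k\<in>K. g k (transfer_weight s t e k)) = g t e + g s (- e) + (\<Sum>k\<in>K - {s, t}. g k 0)"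
proof -
  have "(\<Sum>k\<in>K. g k (transfer_weight s t e k))
      = g t e + (\<Sum>k\<in>K - {t}. g k (transfer_weight s t e k))"
    using assms by (subst sum.remove[of _ t]) (auto simp: transfer_weight_def)
  also have "(\<Sum>k\<in>K - {t}. g k (transfer_weight s t e k))
      = g s (- e) + (\<Sum>k\<in>K - {t} - {s}. g k (transfer_weight s t e k))"
    using assms by (subst sum.remove[of _ s]) (auto simp: transfer_weight_def)
  also have "(\<Sum>k\<in>K - {t} - {s}. g k (transfer_weight s t e k)) = (\<Sum>k\<in>K - {s, t}. g k 0)"
    by (intro sum.cong) (auto simp: transfer_weight_def)
  finally show ?thesis by (simp add: add.assoc)
qed

locale optimal_plan = prob_space M
  for M :: "'a measure" +
  fixes F :: "nat \<Rightarrow> 'a measure" and T :: nat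
    and r :: "nat \<Rightarrow> 'a \<Rightarrow> real" and u :: "nat \<Rightarrow> real \<Rightarrow> real"
    and lam :: "nat \<Rightarrow> real" and W :: "'a \<Rightarrow> real" and X :: "nat \<Rightarrow> 'a \<Rightarrow> real"
  assumes filt_sub: "\<And>t. t \<le> T \<Longrightarrow> subalgebra M (F t)"
    and filt_mono: "\<And>s t. s \<le> t \<Longrightarrow> t \<le> T \<Longrightarrow> sets (F s) \<subseteq> sets (F t)"
    and r_pred: "\<And>t. t \<in> {1..T} \<Longrightarrow> r t \<in> borel_measurable (F (t - 1))"
    and r_bdd: "\<exists>C. \<forall>t\<in>{1..T}. \<forall>x\<in>space M. 0 \<le> r t x \<and> r t x \<le> C"
    and u_conc: "\<And>t. t \<in> {1..T} \<Longrightarrow> strictly_concave (u t)"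
    and u_diff: "\<And>t x. t \<in> {1..T} \<Longrightarrow> u t differentiable (at x)"
    and u_C1: "\<And>t. t \<in> {1..T} \<Longrightarrow> continuous_on UNIV (deriv (u t))"
    and u_pos: "\<And>t x. t \<in> {1..T} \<Longrightarrow> deriv (u t) x > 0"
    and lam_nonneg: "\<And>t. t \<in> {1..T} \<Longrightarrow> lam t \<ge> 0"
    and sol: "solves_P M F T r W lam u X"
begin

lemma measurable_later:
  "f \<in> borel_measurable (F s) \<Longrightarrow> s \<le> t \<Longrightarrow> t \<le> T \<Longrightarrow> f \<in> borel_measurable (F t)"
  using filt_sub[of s] filt_sub[of t] filt_mono[of s t]
  by (intro measurable_from_subalg[of "F t"]) (auto simp: subalgebra_def)

lemma measurable_M: "f \<in> borel_measurable (F t) \<Longrightarrow> t \<le> T \<Longrightarrow> f \<in> borel_measurable M"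
  using measurable_from_subalg filt_sub by blast

lemma sets_filtration: "A \<in> sets (F t) \<Longrightarrow> t \<le> T \<Longrightarrow> A \<in> sets M"
  using filt_sub[of t] by (auto simp: subalgebra_def)

lemma space_in_filtration: "t \<le> T \<Longrightarrow> space M \<in> sets (F t)"
  using filt_sub[of t] sets.top[of "F t"] by (auto simp: subalgebra_def)

lemma bank_bounds:
  obtains B where "\<And>k x. x \<in> space M \<Longrightarrow> k \<le> T \<Longrightarrow> 1 \<le> bank r k x \<and> bank r k x \<le> B k"
proof -
  obtain C where C: "\<forall>t\<in>{1..T}. \<forall>x\<in>space M. 0 \<le> r t x \<and> r t x \<le> C"
    using r_bdd by blast
  have "1 \<le> bank r k x \<and> bank r k x \<le> (1 + C) ^ k" if x: "x \<in> space M" and k: "k \<le> T" for k x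
  proof -
    have r_i: "0 \<le> r i x \<and> r i x \<le> C" if "i \<in> {1..k}" for i
      using C x k that by auto
    have "(\<Prod>i\<in>{1..k}. 1 + r i x) \<le> (\<Prod>i\<in>{1..k}. 1 + C)"
      by (rule prod_mono) (use r_i in auto)
    moreover have "1 \<le> (\<Prod>i\<in>{1..k}. 1 + r i x)"
      by (rule prod_ge_1) (use r_i in auto)
    ultimately show ?thesis unfolding bank_def by simp
  qed
  then show ?thesis by (rule that)
qed

lemma bank_ge_1: "x \<in> space M \<Longrightarrow> k \<le> T \<Longrightarrow> 1 \<le> bank r k x"
  by (rule bank_bounds) auto

text \<open>B_k is F_k-measurable (even F_(k-1)-measurable) because r is predictable.\<close>
lemma bank_measurable: "k \<le> T \<Longrightarrow> bank r k \<in> borel_measurable (F k)"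
  unfolding bank_def[abs_def]
  by (intro borel_measurable_prod borel_measurable_add borel_measurable_const
      measurable_later[OF r_pred]) auto

lemma X_admissible: "X \<in> admissible M F T r W"
  using sol unfolding solves_P_def by auto

lemma disc_X_measurable: "k \<in> {1..T} \<Longrightarrow> disc r X k \<in> borel_measurable (F k)"
  unfolding disc_def[abs_def] using X_admissible bank_measurable
  by (intro borel_measurable_divide) (auto simp: admissible_def)

lemma disc_X_measurable_M: "k \<in> {1..T} \<Longrightarrow> disc r X k \<in> borel_measurable M"
  using disc_X_measurable measurable_M by auto

text \<open>Discounting does not increase absolute values, so X~_k is essentially bounded.\<close>
lemma disc_X_bounded:
  assumes k: "k \<in> {1..T}"
  obtains C where "AE x in M. \<bar>disc r X k x\<bar> \<le> C"
proof -
  obtain C where C: "AE x in M. \<bar>X k x\<bar> \<le> C"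
    using X_admissible k unfolding admissible_def Linf_def by blast
  have "AE x in M. \<bar>disc r X k x\<bar> \<le> C"
    using C AE_space
  proof eventually_elim
    case (elim x)
    have B: "1 \<le> bank r k x" using bank_ge_1 elim k by auto
    then have "\<bar>X k x\<bar> / bank r k x \<le> \<bar>X k x\<bar>"
      by (simp add: divide_le_eq mult_le_cancel_left1)
    then show ?case using elim B by (simp add: disc_def abs_divide)
  qed
  then show ?thesis using that by blast
qed

lemma disc_transfer:
  "x \<in> space M \<Longrightarrow> k \<le> T \<Longrightarrow>
    disc r (transfer r X s t A e) k x = disc r X k x + transfer_weight s t e k * indicator A x"
  using bank_ge_1[of x k] unfolding disc_def transfer_def by (simp add: field_simps)

lemma transfer_admissible:
  assumes s: "s \<in> {1..T}" and t: "t \<in> {1..T}" and st: "s \<noteq> t"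
    and As: "A \<in> sets (F s)" and At: "A \<in> sets (F t)"
  shows "transfer r X s t A e \<in> admissible M F T r W"
proof -
  let ?Y = "transfer r X s t A e"
  have weight_measurable:
    "(\<lambda>x. transfer_weight s t e k * indicator A x) \<in> borel_measurable (F k)" for k
  proof (cases "k = t \<or> k = s")
    case True
    then have [measurable]: "A \<in> sets (F k)" using As At by auto
    show ?thesis by measurable
  qed (simp add: transfer_weight_def)
  have Y_measurable: "?Y k \<in> borel_measurable (F k)" if k: "k \<in> {1..T}" for k
  proof -
    have "X k \<in> borel_measurable (F k)" using X_admissible k unfolding admissible_def by auto
    then have "(\<lambda>x. X k x + (transfer_weight s t e k * indicator A x) * bank r k x)
                 \<in> borel_measurable (F k)"
      using k by (intro borel_measurable_add borel_measurable_times weight_measurable bank_measurable) auto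
    then show ?thesis unfolding transfer_def[abs_def] by (simp add: mult.assoc)
  qed
  have Y_bounded: "?Y k \<in> Linf M (F T)" if k: "k \<in> {1..T}" for k
  proof -
    obtain C where C: "AE x in M. \<bar>X k x\<bar> \<le> C"
      using X_admissible k unfolding admissible_def Linf_def by blast
    obtain B where B: "\<And>k x. x \<in> space M \<Longrightarrow> k \<le> T \<Longrightarrow> 1 \<le> bank r k x \<and> bank r k x \<le> B k"
      using bank_bounds by blast
    have "AE x in M. \<bar>?Y k x\<bar> \<le> C + \<bar>e\<bar> * B k"
      using C AE_space
    proof eventually_elim
      case (elim x)
      have "\<bar>transfer_weight s t e k * indicator A x\<bar> \<le> \<bar>e\<bar>"
        by (auto simp: transfer_weight_def indicator_def)
      moreover have "\<bar>bank r k x\<bar> \<le> B k" using B[of x k] elim k by auto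
      ultimately have "\<bar>transfer_weight s t e k * indicator A x * bank r k x\<bar> \<le> \<bar>e\<bar> * B k"
        by (simp add: abs_mult mult_mono)
      then show ?case using elim unfolding transfer_def by simp
    qed
    then show ?thesis
      using measurable_later[OF Y_measurable[OF k]] k unfolding Linf_def by auto
  qed
  have "AE x in M. (\<Sum>k\<in>{1..T}. disc r X k x) = W x"
    using X_admissible unfolding admissible_def by blast
  then have "AE x in M. (\<Sum>k\<in>{1..T}. disc r ?Y k x) = W x"
    using AE_space
  proof eventually_elim
    case (elim x)
    have "(\<Sum>k\<in>{1..T}. disc r ?Y k x)
        = (\<Sum>k\<in>{1..T}. disc r X k x + transfer_weight s t e k * indicator A x)"
      using elim by (intro sum.cong) (auto simp: disc_transfer)
    also have "\<dots> = (\<Sum>k\<in>{1..T}. disc r X k x) + (\<Sum>k\<in>{1..T}. transfer_weight s t e k * indicator A x)"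
      by (rule sum.distrib)
    also have "(\<Sum>k\<in>{1..T}. transfer_weight s t e k * indicator A x) = 0"
      using sum_transfer_weight[of "{1..T}" s t "\<lambda>k c. c * indicator A x"] s t st by simp
    finally show ?case using elim by simp
  qed
  then show ?thesis using Y_measurable Y_bounded unfolding admissible_def by blast
qed

definition shifted_utility :: "nat \<Rightarrow> 'a set \<Rightarrow> real \<Rightarrow> real" where
  "shifted_utility k A a = (\<integral>x. u k (disc r X k x + a * indicator A x) \<partial>M)"

definition shifted_marginal :: "nat \<Rightarrow> 'a set \<Rightarrow> real \<Rightarrow> real" where
  "shifted_marginal k A a = (\<integral>x. indicator A x * deriv (u k) (disc r X k x + a * indicator A x) \<partial>M)"

lemma objective_transfer:
  assumes s: "s \<in> {1..T}" and t: "t \<in> {1..T}" and st: "s \<noteq> t"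
  shows "objective M T lam u r (transfer r X s t A e) = objective M T lam u r X
    + lam t * (shifted_utility t A e - shifted_utility t A 0)
    + lam s * (shifted_utility s A (- e) - shifted_utility s A 0)"
proof -
  have "objective M T lam u r (transfer r X s t A e)
      = (\<Sum>k\<in>{1..T}. lam k * shifted_utility k A (transfer_weight s t e k))"
    unfolding objective_def shifted_utility_def
    by (intro sum.cong refl arg_cong2[where f="(*)"] Bochner_Integration.integral_cong)
      (auto simp: disc_transfer)
  moreover have "objective M T lam u r X = (\<Sum>k\<in>{1..T}. lam k * shifted_utility k A 0)"
    unfolding objective_def shifted_utility_def by simp
  moreover have "(\<Sum>k\<in>{1..T}. lam k * shifted_utility k A (transfer_weight s t e k))
      - (\<Sum>k\<in>{1..T}. lam k * shifted_utility k A 0)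
    = lam t * (shifted_utility t A e - shifted_utility t A 0)
      + lam s * (shifted_utility s A (- e) - shifted_utility s A 0)"
    using sum_transfer_weight[of "{1..T}" s t
        "\<lambda>k c. lam k * (shifted_utility k A c - shifted_utility k A 0)" e] s t st
    by (simp add: sum_subtractf right_diff_distrib)
  ultimately show ?thesis by simp
qed

section \<open>First-order conditions\<close>

text \<open>Optimality against a transfer of e > 0 units from s to t, combined with the
  integrated tangent inequality for u_s and u_t.\<close>
lemma transfer_first_order:
  assumes s: "s \<in> {1..T}" and t: "t \<in> {1..T}" and st: "s \<noteq> t"
    and As: "A \<in> sets (F s)" and At: "A \<in> sets (F t)" and e: "0 < e"
  shows "lam t * shifted_marginal t A e \<le> lam s * shifted_marginal s A (- e)"
proof -
  have A: "A \<in> sets M" using sets_filtration As s by auto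
  have optimal: "lam t * (shifted_utility t A e - shifted_utility t A 0)
      + lam s * (shifted_utility s A (- e) - shifted_utility s A 0) \<le> 0"
    using sol transfer_admissible[OF s t st As At, of e] objective_transfer[OF s t st, of A e]
    unfolding solves_P_def by fastforce
  have increment: "a * shifted_marginal k A a \<le> shifted_utility k A a - shifted_utility k A 0"
    if k: "k \<in> {1..T}" for k a
  proof -
    obtain C where "AE x in M. \<bar>disc r X k x\<bar> \<le> C" using disc_X_bounded[OF k] by blast
    from perturbed_utility_increment[OF finite_measure_axioms disc_X_measurable_M[OF k] this A
        u_conc[OF k] u_diff[OF k] u_C1[OF k], of a]
    show ?thesis unfolding shifted_marginal_def shifted_utility_def by simp
  qed
  have "e * (lam t * shifted_marginal t A e) \<le> lam t * (shifted_utility t A e - shifted_utility t A 0)"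
    using mult_left_mono[OF increment[OF t, of e] lam_nonneg[OF t]] by (simp add: ac_simps)
  moreover have "- e * (lam s * shifted_marginal s A (- e))
      \<le> lam s * (shifted_utility s A (- e) - shifted_utility s A 0)"
    using mult_left_mono[OF increment[OF s, of "- e"] lam_nonneg[OF s]] by (simp add: ac_simps)
  ultimately have "e * (lam t * shifted_marginal t A e - lam s * shifted_marginal s A (- e)) \<le> 0"
    using optimal by (simp add: algebra_simps)
  then show ?thesis using e by (simp add: mult_le_0_iff)
qed

lemma shifted_marginal_tendsto:
  assumes k: "k \<in> {1..T}" and A: "A \<in> sets M" and e: "e \<longlonglongrightarrow> 0" "\<And>n. \<bar>e n\<bar> \<le> 1"
  shows "(\<lambda>n. shifted_marginal k A (e n)) \<longlonglongrightarrow> shifted_marginal k A 0"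
proof -
  obtain C where "AE x in M. \<bar>disc r X k x\<bar> \<le> C" using disc_X_bounded[OF k] by blast
  from perturbed_integral_tendsto[OF finite_measure_axioms disc_X_measurable_M[OF k] this
      u_C1[OF k] A e]
  show ?thesis unfolding shifted_marginal_def by simp
qed

text \<open>Letting the transfer size tend to 0: lam_t E[1_A u_t'(X~_t)] <= lam_s E[1_A u_s'(X~_s)].\<close>
lemma marginal_le:
  assumes s: "s \<in> {1..T}" and t: "t \<in> {1..T}" and st: "s \<noteq> t"
    and As: "A \<in> sets (F s)" and At: "A \<in> sets (F t)"
  shows "lam t * shifted_marginal t A 0 \<le> lam s * shifted_marginal s A 0"
proof -
  have A: "A \<in> sets M" using sets_filtration As s by auto
  define e where "e n = inverse (real (Suc n))" for n
  have e_lim: "e \<longlonglongrightarrow> 0" unfolding e_def by (rule LIMSEQ_inverse_real_of_nat)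
  have e_le_1: "\<bar>e n\<bar> \<le> 1" and e_pos: "0 < e n" for n
    unfolding e_def by (auto simp: inverse_le_1_iff)
  have "(\<lambda>n. lam t * shifted_marginal t A (e n)) \<longlonglongrightarrow> lam t * shifted_marginal t A 0"
    by (intro tendsto_mult_left shifted_marginal_tendsto[OF t A e_lim e_le_1])
  moreover have "(\<lambda>n. lam s * shifted_marginal s A (- e n)) \<longlonglongrightarrow> lam s * shifted_marginal s A 0"
    using tendsto_minus[OF e_lim] e_le_1
    by (intro tendsto_mult_left shifted_marginal_tendsto[OF s A]) auto
  ultimately show ?thesis
    by (rule LIMSEQ_le) (auto intro!: transfer_first_order[OF s t st As At] e_pos)
qed

text \<open>Exchanging the roles of s and t gives equality.\<close>
lemma marginal_eq:
  assumes s: "s \<in> {1..T}" and t: "t \<in> {1..T}"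
    and As: "A \<in> sets (F s)" and At: "A \<in> sets (F t)"
  shows "lam t * shifted_marginal t A 0 = lam s * shifted_marginal s A 0"
  using marginal_le[OF s t _ As At] marginal_le[OF t s _ At As] by (cases "s = t") auto

lemma marginal_measurable:
  "k \<in> {1..T} \<Longrightarrow> (\<lambda>x. lam k * deriv (u k) (disc r X k x)) \<in> borel_measurable (F k)"
  using measurable_compose[OF disc_X_measurable borel_measurable_continuous_onI[OF u_C1]] by simp

lemma marginal_integrable:
  assumes k: "k \<in> {1..T}"
  shows "integrable M (\<lambda>x. deriv (u k) (disc r X k x))"
proof -
  obtain C where "AE x in M. \<bar>disc r X k x\<bar> \<le> C" using disc_X_bounded[OF k] by blast
  from integrable_continuous_of_bounded[OF finite_measure_axioms disc_X_measurable_M[OF k] this u_C1[OF k]]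
  show ?thesis .
qed

lemma set_integral_marginal:
  "(\<integral>x\<in>A. lam k * deriv (u k) (disc r X k x) \<partial>M) = lam k * shifted_marginal k A 0"
  unfolding set_lebesgue_integral_def shifted_marginal_def by (simp add: ac_simps)

text \<open>Part (a): lam_t u_t'(X~_t) is a martingale, since by marginal_eq its integrals
  over every A in F_s agree for all t >= s.\<close>
theorem marginal_martingale:
  "martingale_on M F {1..T} (\<lambda>t x. lam t * deriv (u t) (disc r X t x))"
  unfolding martingale_on_def
proof (intro conjI ballI impI)
  fix t assume t: "t \<in> {1..T}"
  show "(\<lambda>x. lam t * deriv (u t) (disc r X t x)) \<in> borel_measurable (F t)"
    using marginal_measurable[OF t] .
  show "integrable M (\<lambda>x. lam t * deriv (u t) (disc r X t x))"
    using marginal_integrable[OF t] by simp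
next
  fix s t assume s: "s \<in> {1..T}" and t: "t \<in> {1..T}" and st: "s \<le> t"
  interpret Fs: finite_measure_subalgebra M "F s"
    using s by (intro finite_measure_subalgebra.intro finite_measure_subalgebra_axioms.intro
        finite_measure_axioms filt_sub) auto
  show "AE x in M. real_cond_exp M (F s) (\<lambda>x. lam t * deriv (u t) (disc r X t x)) x
                   = lam s * deriv (u s) (disc r X s x)"
  proof (rule Fs.real_cond_exp_charact)
    fix A assume As: "A \<in> sets (F s)"
    then have At: "A \<in> sets (F t)" using filt_mono[OF st] t by auto
    show "(\<integral>x\<in>A. lam t * deriv (u t) (disc r X t x) \<partial>M) = (\<integral>x\<in>A. lam s * deriv (u s) (disc r X s x) \<partial>M)"
      unfolding set_integral_marginal by (rule marginal_eq[OF s t As At])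
  qed (use s t marginal_integrable marginal_measurable in auto)
qed

lemma marginal_expectation_pos:
  assumes k: "k \<in> {1..T}"
  shows "0 < shifted_marginal k (space M) 0"
proof -
  have "(\<integral>x. 0 \<partial>M) < (\<integral>x. deriv (u k) (disc r X k x) \<partial>M)"
    using marginal_integrable[OF k] u_pos[OF k]
    by (intro integral_less_AE_space) (auto simp: emeasure_space_1)
  then show ?thesis unfolding shifted_marginal_def by (simp cong: Bochner_Integration.integral_cong)
qed

text \<open>Part (b): lam_t E[u_t'(X~_t)] does not depend on t, so if one weight is nonzero
  then all weights are positive.\<close>
theorem weights_positive:
  assumes lam_nonzero: "\<exists>t\<in>{1..T}. lam t \<noteq> 0"
  shows "\<forall>t\<in>{1..T}. lam t > 0"
proof
  fix t assume t: "t \<in> {1..T}"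
  obtain t0 where t0: "t0 \<in> {1..T}" "lam t0 \<noteq> 0" using lam_nonzero by blast
  have "lam t0 * shifted_marginal t0 (space M) 0 = lam t * shifted_marginal t (space M) 0"
    using t t0 by (intro marginal_eq space_in_filtration) auto
  then have "lam t \<noteq> 0"
    using t0 marginal_expectation_pos[OF t0(1)] by auto
  then show "lam t > 0" using lam_nonneg[OF t] by simp
qed

end

theorem lemma2p11:
  fixes M :: "'a measure" and F :: "nat \<Rightarrow> 'a measure" and T :: nat
    and r :: "nat \<Rightarrow> 'a \<Rightarrow> real" and u :: "nat \<Rightarrow> real \<Rightarrow> real"
    and lam :: "nat \<Rightarrow> real" and W :: "'a \<Rightarrow> real" and X :: "nat \<Rightarrow> 'a \<Rightarrow> real"
  assumes "prob_space M"
    and "T \<ge> 1"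
    and filt_sub: "\<And>t. t \<le> T \<Longrightarrow> subalgebra M (F t)"
    and filt_mono: "\<And>s t. s \<le> t \<Longrightarrow> t \<le> T \<Longrightarrow> sets (F s) \<subseteq> sets (F t)"
    and r_pred: "\<And>t. t \<in> {1..T} \<Longrightarrow> r t \<in> borel_measurable (F (t - 1))"
    and r_bdd: "\<exists>C. \<forall>t\<in>{1..T}. \<forall>x\<in>space M. 0 \<le> r t x \<and> r t x \<le> C"
    and u_conc: "\<And>t. t \<in> {1..T} \<Longrightarrow> strictly_concave (u t)"
    and u_diff: "\<And>t x. t \<in> {1..T} \<Longrightarrow> u t differentiable (at x)"
    and u_C1: "\<And>t. t \<in> {1..T} \<Longrightarrow> continuous_on UNIV (deriv (u t))"
    and u_pos: "\<And>t x. t \<in> {1..T} \<Longrightarrow> deriv (u t) x > 0"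
    and W: "W \<in> Linf M (F T)"
    and lam_nonneg: "\<And>t. t \<in> {1..T} \<Longrightarrow> lam t \<ge> 0"
    and lam_nonzero: "\<exists>t\<in>{1..T}. lam t \<noteq> 0"
    and sol: "solves_P M F T r W lam u X"
  shows "martingale_on M F {1..T} (\<lambda>t x. lam t * deriv (u t) (disc r X t x))
         \<and> (\<forall>t\<in>{1..T}. lam t > 0)"
proof -
  interpret optimal_plan M F T r u lam W X
    using assms by (simp add: optimal_plan_def optimal_plan_axioms_def)
  show ?thesis using marginal_martingale weights_positive[OF lam_nonzero] by blast
qed

end
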